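(* Let $R=(S^0,\dots,S^T)$ be any $T$-covering in a symmetric congestion game in which every delay function is $f(x)=x$, and assume $\mathrm{OPT}>0$. Then $$\frac{C(S^T)}{\mathrm{OPT}}\le(2+2\sqrt2)\sqrt{\frac{C(S^0)}{\mathrm{OPT}}}.$$
   Context: A congestion game has players $N=\{1,\dots,n\}$, a finite resource set $E$ and strategy sets $\Sigma_i\subseteq 2^E$; it is symmetric if all $\Sigma_i$ equal a common set $\Sigma$. For a profile $S=(s_1,\dots,s_n)$, $n_e(S)=|\{i:e\in s_i\}|$. Here all delays are $f(x)=x$, so $c_i(S)=\sum_{e\in s_i}n_e(S)$ and $C(S)=\sum_i c_i(S)=\sum_{e\in E}n_e(S)^2$; $\mathrm{OPT}=\min_S C(S)$. A best response of player $i$ in $S$ is a strategy $s_i^b\in\Sigma_i$ minimizing $c_i(S_{-i},\cdot)$ (where $(S_{-i},s_i')$ replaces $s_i$ by $s_i'$); if no strategy strictly decreases $i$'s cost, the best response is $s_i$ itself. A $T$-covering is a sequence of profiles $R=(S^0,\dots,S^T)$ with players $\pi(1),\dots,\pi(T)$ such that for each $1\le t\le T$, $S^t=(S^{t-1}_{-\pi(t)},s')$ with $s'$ a best response of $\pi(t)$ in $S^{t-1}$, and every player occurs at least once among $\pi(1),\dots,\pi(T)$. *)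

theory Defs
  imports "HOL-Analysis.Analysis"
begin

text \<open>Symmetric congestion game with identity delays. Players are 1..n,
 a profile is a function from players to strategies (subsets of the resource set E),
 every player uses the common strategy set Sig.\<close>

definition load :: "nat \<Rightarrow> (nat \<Rightarrow> 'e set) \<Rightarrow> 'e \<Rightarrow> nat" where
  "load n S e = card {i \<in> {1..n}. e \<in> S i}"

definition pcost :: "nat \<Rightarrow> (nat \<Rightarrow> 'e set) \<Rightarrow> nat \<Rightarrow> nat" where
  "pcost n S i = (\<Sum>e\<in>S i. load n S e)"

definition social_cost :: "nat \<Rightarrow> (nat \<Rightarrow> 'e set) \<Rightarrow> nat" where
  "social_cost n S = (\<Sum>i\<in>{1..n}. pcost n S i)"

definition valid_profile :: "nat \<Rightarrow> 'e set set \<Rightarrow> (nat \<Rightarrow> 'e set) \<Rightarrow> bool" where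
  "valid_profile n Sig S \<longleftrightarrow> (\<forall>i\<in>{1..n}. S i \<in> Sig)"

definition OPT :: "nat \<Rightarrow> 'e set set \<Rightarrow> nat" where
  "OPT n Sig = (LEAST c. \<exists>S. valid_profile n Sig S \<and> c = social_cost n S)"

definition best_response :: "nat \<Rightarrow> 'e set set \<Rightarrow> (nat \<Rightarrow> 'e set) \<Rightarrow> nat \<Rightarrow> 'e set \<Rightarrow> bool" where
  "best_response n Sig S i s' \<longleftrightarrow>
     s' \<in> Sig \<and>
     (\<forall>s\<in>Sig. pcost n (S(i := s')) i \<le> pcost n (S(i := s)) i) \<and>
     ((\<forall>s\<in>Sig. pcost n S i \<le> pcost n (S(i := s)) i) \<longrightarrow> s' = S i)"

definition T_covering :: "nat \<Rightarrow> 'e set set \<Rightarrow> nat \<Rightarrow> (nat \<Rightarrow> nat \<Rightarrow> 'e set) \<Rightarrow> (nat \<Rightarrow> nat) \<Rightarrow> bool" where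
  "T_covering n Sig T R who \<longleftrightarrow>
     valid_profile n Sig (R 0) \<and>
     (\<forall>t\<in>{1..T}. who t \<in> {1..n} \<and>
        (\<exists>s'. best_response n Sig (R (t - 1)) (who t) s' \<and> R t = (R (t - 1))(who t := s'))) \<and>
     {1..n} \<subseteq> who ` {1..T}"

end

theory Submission
  imports Defs
begin

text \<open>
  Let $S^0, \dots, S^T$ be a $T$-covering with identity delays.
  (1) Twice Rosenthal's potential, $\Psi(S) = \sum_e n_e (n_e + 1) = C(S) + \sum_e n_e$, does not
      increase under best responses, and $C(S) \le \Psi(S) \le 2 C(S)$; hence
      $C(S^t) \le 2 C(S^0)$ for all $t$.
  (2) Let $c_j$ be the cost of player $j$ right after its last move. Players that finished
      moving before $j$ already sit on their final strategies, which yields a lower bound on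
      $c_j$; a symmetric counting argument over pairs of players turns it into
      $C(S^T) \le 2 \sum_j c_j$.
  (3) Since $j$'s last move is a best response, $c_j$ is at most the cost of deviating to any
      strategy of an optimal profile; averaging over these and applying Cauchy--Schwarz
      gives $n c_j \le \sqrt{2\,\mathrm{OPT}\, C(S^0)} + \mathrm{OPT}$.
  Combining, $C(S^T) \le 2(\sqrt{2\,\mathrm{OPT}\, C(S^0)} + \mathrm{OPT})$, which with
  $\mathrm{OPT} \le C(S^0)$ is the claimed ratio bound.
\<close>

lemma sum_over_players_eq_sum_over_resources:
  fixes f :: "'e \<Rightarrow> 'b::comm_semiring_1"
  assumes "finite E" and "\<forall>i\<in>{1..n}. S i \<subseteq> E"
  shows "(\<Sum>i\<in>{1..n}. \<Sum>e\<in>S i. f e) = (\<Sum>e\<in>E. of_nat (load n S e) * f e)"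
proof -
  have "S i = {e \<in> E. e \<in> S i}" if "i \<in> {1..n}" for i
    using assms(2) that by blast
  then have "(\<Sum>i\<in>{1..n}. \<Sum>e\<in>S i. f e) = (\<Sum>i\<in>{1..n}. \<Sum>e\<in>{e \<in> E. e \<in> S i}. f e)"
    by (intro sum.cong) auto
  also have "\<dots> = (\<Sum>e\<in>E. \<Sum>i\<in>{i \<in> {1..n}. e \<in> S i}. f e)"
    using assms(1) by (rule sum.swap_restrict[OF finite_atLeastAtMost])
  also have "\<dots> = (\<Sum>e\<in>E. of_nat (load n S e) * f e)"
    by (simp add: load_def)
  finally show ?thesis .
qed

lemma social_cost_eq_sum_load_squares:
  assumes "finite E" and "\<forall>i\<in>{1..n}. S i \<subseteq> E"
  shows "social_cost n S = (\<Sum>e\<in>E. (load n S e)\<^sup>2)"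
  using sum_over_players_eq_sum_over_resources[OF assms, where f = "load n S"]
  by (simp add: social_cost_def pcost_def power2_eq_square)

definition load_except :: "nat \<Rightarrow> (nat \<Rightarrow> 'e set) \<Rightarrow> nat \<Rightarrow> 'e \<Rightarrow> nat" where
  "load_except n S i e = card {j \<in> {1..n} - {i}. e \<in> S j}"

text \<open>Twice Rosenthal's potential for identity delays, $\sum_e n_e (n_e + 1)$.\<close>
definition potential :: "nat \<Rightarrow> 'e set \<Rightarrow> (nat \<Rightarrow> 'e set) \<Rightarrow> nat" where
  "potential n E S = (\<Sum>e\<in>E. load n S e * (load n S e + 1))"

lemma load_fun_upd:
  assumes "i \<in> {1..n}"
  shows "load n (S(i := s)) e = load_except n S i e + (if e \<in> s then 1 else 0)"
proof -
  have "{j \<in> {1..n}. e \<in> (S(i := s)) j} =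
      {j \<in> {1..n} - {i}. e \<in> S j} \<union> (if e \<in> s then {i} else {})"
    using assms by auto
  then show ?thesis
    unfolding load_def load_except_def by (simp add: card_Un_disjoint)
qed

lemma load_except_le_load: "load_except n S i e \<le> load n S e"
  unfolding load_except_def load_def by (rule card_mono) auto

lemma pcost_fun_upd:
  assumes "i \<in> {1..n}"
  shows "pcost n (S(i := s)) i = (\<Sum>e\<in>s. load_except n S i e + 1)"
  unfolding pcost_def by (rule sum.cong) (auto simp: load_fun_upd[OF assms])

lemma pcost_deviation_le:
  assumes "i \<in> {1..n}"
  shows "pcost n (S(i := s)) i \<le> (\<Sum>e\<in>s. load n S e + 1)"
  unfolding pcost_fun_upd[OF assms] by (intro sum_mono) (simp add: load_except_le_load)

lemma potential_fun_upd:
  assumes "i \<in> {1..n}" and "finite E" and "s \<subseteq> E"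
  shows "potential n E (S(i := s)) =
    (\<Sum>e\<in>E. load_except n S i e * (load_except n S i e + 1)) + 2 * pcost n (S(i := s)) i"
proof -
  let ?L = "load_except n S i"
  have "potential n E (S(i := s)) =
      (\<Sum>e\<in>E. ?L e * (?L e + 1) + (if e \<in> s then 2 * (?L e + 1) else 0))"
    unfolding potential_def load_fun_upd[OF assms(1)]
    by (rule sum.cong) (auto simp: algebra_simps)
  also have "\<dots> = (\<Sum>e\<in>E. ?L e * (?L e + 1)) + (\<Sum>e\<in>E \<inter> s. 2 * (?L e + 1))"
    using assms(2) by (simp add: sum.distrib sum.If_cases Int_def)
  also have "(\<Sum>e\<in>E \<inter> s. 2 * (?L e + 1)) = 2 * pcost n (S(i := s)) i"
    using assms(3) by (simp add: pcost_fun_upd[OF assms(1)] sum_distrib_left Int_absorb1)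
  finally show ?thesis .
qed

lemma potential_mono_pcost:
  assumes "i \<in> {1..n}" and "finite E" and "s \<subseteq> E" and "s' \<subseteq> E"
    and "pcost n (S(i := s)) i \<le> pcost n (S(i := s')) i"
  shows "potential n E (S(i := s)) \<le> potential n E (S(i := s'))"
  using assms(5) by (simp add: potential_fun_upd[OF assms(1,2,3)] potential_fun_upd[OF assms(1,2,4)])

lemma potential_eq_social_cost_plus_loads:
  assumes "finite E" and "\<forall>i\<in>{1..n}. S i \<subseteq> E"
  shows "potential n E S = social_cost n S + (\<Sum>e\<in>E. load n S e)"
  using social_cost_eq_sum_load_squares[OF assms]
  by (simp add: potential_def sum.distrib[symmetric] algebra_simps power2_eq_square)

lemma social_cost_le_potential:
  assumes "finite E" and "\<forall>i\<in>{1..n}. S i \<subseteq> E"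
  shows "social_cost n S \<le> potential n E S"
  by (simp add: potential_eq_social_cost_plus_loads[OF assms])

lemma potential_le_twice_social_cost:
  assumes "finite E" and "\<forall>i\<in>{1..n}. S i \<subseteq> E"
  shows "potential n E S \<le> 2 * social_cost n S"
proof -
  have "(\<Sum>e\<in>E. load n S e) \<le> (\<Sum>e\<in>E. (load n S e)\<^sup>2)"
    by (intro sum_mono) (simp add: power2_eq_square le_square)
  then show ?thesis
    by (simp add: potential_eq_social_cost_plus_loads[OF assms]
        social_cost_eq_sum_load_squares[OF assms])
qed

lemma sum_card_containing:
  assumes "finite N" and "finite A"
  shows "(\<Sum>e\<in>A. card {i \<in> N. e \<in> F i \<and> P i}) = (\<Sum>i\<in>{i \<in> N. P i}. card (A \<inter> F i))"
proof -
  have "(\<Sum>e\<in>A. card {i \<in> N. e \<in> F i \<and> P i}) =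
      (\<Sum>e\<in>A. \<Sum>i\<in>{i \<in> N. P i}. if e \<in> F i then 1 else 0)"
    using assms(1) by (intro sum.cong) (auto simp: sum.If_cases Int_def intro: arg_cong[where f = card])
  also have "\<dots> = (\<Sum>i\<in>{i \<in> N. P i}. \<Sum>e\<in>A. if e \<in> F i then 1 else 0)"
    by (rule sum.swap)
  also have "\<dots> = (\<Sum>i\<in>{i \<in> N. P i}. card (A \<inter> F i))"
    using assms(2) by (simp add: sum.If_cases Int_def)
  finally show ?thesis .
qed

text \<open>An element of F j
  shared with other sets is counted once from the earlier and once from the later side,
  and the two kinds of shared incidences are equinumerous; hence the total incidence count
  is at most twice the count of each set against the sets preceding it.\<close>
lemma sum_card_sharing_le_twice_earlier:
  fixes key :: "'a \<Rightarrow> 'k::linorder"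
  assumes "finite N" and "inj_on key N" and "\<And>j. j \<in> N \<Longrightarrow> finite (F j)"
  shows "(\<Sum>j\<in>N. \<Sum>e\<in>F j. card {i \<in> N. e \<in> F i})
           \<le> 2 * (\<Sum>j\<in>N. \<Sum>e\<in>F j. 1 + card {i \<in> N. e \<in> F i \<and> key i < key j})"
proof -
  define earlier where "earlier j = (\<Sum>e\<in>F j. card {i \<in> N. e \<in> F i \<and> key i < key j})" for j
  define later where "later j = (\<Sum>e\<in>F j. card {i \<in> N. e \<in> F i \<and> key j < key i})" for j
  have split: "card {i \<in> N. e \<in> F i} =
      1 + card {i \<in> N. e \<in> F i \<and> key i < key j} + card {i \<in> N. e \<in> F i \<and> key j < key i}"
    if "j \<in> N" and "e \<in> F j" for j e
  proof -
    have "key i < key j \<or> key j < key i" if "i \<in> N" and "i \<noteq> j" for i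
      using inj_on_contraD[OF assms(2) \<open>i \<noteq> j\<close> \<open>i \<in> N\<close> \<open>j \<in> N\<close>] by auto
    then have "{i \<in> N. e \<in> F i} =
        insert j ({i \<in> N. e \<in> F i \<and> key i < key j} \<union> {i \<in> N. e \<in> F i \<and> key j < key i})"
      using that by auto
    moreover have "{i \<in> N. e \<in> F i \<and> key i < key j} \<inter> {i \<in> N. e \<in> F i \<and> key j < key i} = {}"
      by auto
    ultimately show ?thesis
      using assms(1) by (simp add: card_Un_disjoint)
  qed
  have per_set: "(\<Sum>e\<in>F j. card {i \<in> N. e \<in> F i}) = card (F j) + earlier j + later j"
    if "j \<in> N" for j
  proof -
    have "(\<Sum>e\<in>F j. card {i \<in> N. e \<in> F i}) = (\<Sum>e\<in>F j.
        1 + card {i \<in> N. e \<in> F i \<and> key i < key j} + card {i \<in> N. e \<in> F i \<and> key j < key i})"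
      using that by (intro sum.cong refl split)
    then show ?thesis
      unfolding earlier_def later_def by (simp only: sum.distrib) simp
  qed
  have symmetric: "(\<Sum>j\<in>N. later j) = (\<Sum>j\<in>N. earlier j)"
  proof -
    have "(\<Sum>j\<in>N. later j) = (\<Sum>j\<in>N. \<Sum>i\<in>{i \<in> N. key j < key i}. card (F j \<inter> F i))"
      unfolding later_def using assms(1,3) by (intro sum.cong refl sum_card_containing)
    also have "\<dots> = (\<Sum>i\<in>N. \<Sum>j\<in>{j \<in> N. key j < key i}. card (F j \<inter> F i))"
      by (rule sum.swap_restrict[OF assms(1,1)])
    also have "\<dots> = (\<Sum>i\<in>N. earlier i)"
      unfolding earlier_def using assms(1,3)
      by (intro sum.cong refl) (simp add: sum_card_containing Int_commute)
    finally show ?thesis .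
  qed
  have "(\<Sum>j\<in>N. \<Sum>e\<in>F j. card {i \<in> N. e \<in> F i}) =
      (\<Sum>j\<in>N. card (F j)) + (\<Sum>j\<in>N. earlier j) + (\<Sum>j\<in>N. later j)"
    by (simp add: per_set sum.distrib)
  also have "\<dots> \<le> 2 * ((\<Sum>j\<in>N. card (F j)) + (\<Sum>j\<in>N. earlier j))"
    unfolding symmetric by simp
  also have "\<dots> = 2 * (\<Sum>j\<in>N. \<Sum>e\<in>F j. 1 + card {i \<in> N. e \<in> F i \<and> key i < key j})"
    unfolding earlier_def by (simp only: sum.distrib) simp
  finally show ?thesis .
qed

lemma sum_mult_succ_le_sqrt:
  fixes x y :: "'e \<Rightarrow> nat"
  shows "real (\<Sum>e\<in>E. x e * (y e + 1))
           \<le> sqrt ((\<Sum>e\<in>E. (real (x e))\<^sup>2) * (\<Sum>e\<in>E. (real (y e))\<^sup>2)) + (\<Sum>e\<in>E. (real (x e))\<^sup>2)"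
proof -
  have "(\<Sum>e\<in>E. real (x e) * real (y e)) \<le> sqrt ((\<Sum>e\<in>E. (real (x e))\<^sup>2) * (\<Sum>e\<in>E. (real (y e))\<^sup>2))"
    by (rule real_le_rsqrt) (rule Cauchy_Schwarz_ineq_sum)
  moreover have "(\<Sum>e\<in>E. real (x e)) \<le> (\<Sum>e\<in>E. (real (x e))\<^sup>2)"
    by (intro sum_mono) (simp add: power2_eq_square flip: of_nat_mult)
  ultimately show ?thesis
    by (simp add: sum.distrib algebra_simps)
qed

lemma OPT_le_social_cost:
  assumes "valid_profile n Sig S"
  shows "OPT n Sig \<le> social_cost n S"
  unfolding OPT_def using assms by (intro Least_le) blast

lemma OPT_attained:
  assumes "valid_profile n Sig S"
  obtains S' where "valid_profile n Sig S'" and "social_cost n S' = OPT n Sig"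
proof -
  have "\<exists>c S. valid_profile n Sig S \<and> c = social_cost n S"
    using assms by blast
  from LeastI_ex[OF this] show ?thesis
    using that unfolding OPT_def by metis
qed

lemma ratio_bound:
  fixes a b c :: real
  assumes "0 < a" and "a \<le> b" and "c \<le> 2 * (sqrt (2 * a * b) + a)"
  shows "c / a \<le> (2 + 2 * sqrt 2) * sqrt (b / a)"
proof -
  have "sqrt (2 * a * b) = sqrt (2 * a\<^sup>2 * (b / a))"
    using assms(1) by (simp add: power2_eq_square)
  also have "\<dots> = sqrt 2 * a * sqrt (b / a)"
    using assms(1) by (simp only: real_sqrt_mult real_sqrt_abs abs_of_pos)
  finally have "sqrt (2 * a * b) = sqrt 2 * a * sqrt (b / a)" .
  then have "c / a \<le> 2 * sqrt 2 * sqrt (b / a) + 2"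
    using assms(1,3) by (simp add: field_simps)
  moreover have "1 \<le> sqrt (b / a)"
    using assms(1,2) by simp
  ultimately have "c / a \<le> 2 * sqrt (b / a) + 2 * sqrt 2 * sqrt (b / a)"
    by linarith
  then show ?thesis
    by (simp add: distrib_right)
qed

locale best_response_covering =
  fixes n :: nat and E :: "'e set" and Sig :: "'e set set" and T :: nat
    and R :: "nat \<Rightarrow> nat \<Rightarrow> 'e set" and who :: "nat \<Rightarrow> nat"
  assumes finite_E: "finite E" and Sig_subset: "Sig \<subseteq> Pow E"
    and covering: "T_covering n Sig T R who"
begin

lemma move:
  assumes "t \<in> {1..T}"
  shows "who t \<in> {1..n} \<and>
    (\<exists>s'. best_response n Sig (R (t - 1)) (who t) s' \<and> R t = (R (t - 1))(who t := s'))"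
  using covering assms unfolding T_covering_def by blast

lemma valid_profile_R:
  assumes "t \<le> T"
  shows "valid_profile n Sig (R t)"
  using assms
proof (induction t)
  case 0
  then show ?case
    using covering unfolding T_covering_def by blast
next
  case (Suc t)
  then obtain s' where "best_response n Sig (R t) (who (Suc t)) s'"
    and "R (Suc t) = (R t)(who (Suc t) := s')"
    using move[of "Suc t"] Suc.prems by auto
  with Suc show ?case
    unfolding valid_profile_def best_response_def by auto
qed

lemma strategies_subset_E:
  assumes "t \<le> T"
  shows "\<forall>i\<in>{1..n}. R t i \<subseteq> E"
  using valid_profile_R[OF assms] Sig_subset unfolding valid_profile_def by blast

lemma potential_le_initial:
  assumes "t \<le> T"
  shows "potential n E (R t) \<le> potential n E (R 0)"
  using assms
proof (induction t)
  case 0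
  then show ?case by simp
next
  case (Suc t)
  let ?i = "who (Suc t)"
  obtain s' where i: "?i \<in> {1..n}" and br: "best_response n Sig (R t) ?i s'"
    and step: "R (Suc t) = (R t)(?i := s')"
    using move[of "Suc t"] Suc.prems by auto
  have "R t ?i \<in> Sig"
    using valid_profile_R[of t] Suc.prems i unfolding valid_profile_def by simp
  then have le: "pcost n ((R t)(?i := s')) ?i \<le> pcost n ((R t)(?i := R t ?i)) ?i"
    using br unfolding best_response_def by blast
  have "s' \<subseteq> E"
    using br Sig_subset unfolding best_response_def by auto
  moreover have "R t ?i \<subseteq> E"
    using strategies_subset_E[of t] Suc.prems i by simp
  ultimately have "potential n E ((R t)(?i := s')) \<le> potential n E ((R t)(?i := R t ?i))"
    using potential_mono_pcost[OF i finite_E _ _ le] by blast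
  then have "potential n E (R (Suc t)) \<le> potential n E (R t)"
    unfolding step by simp
  with Suc show ?case by simp
qed

lemma social_cost_le_twice_initial:
  assumes "t \<le> T"
  shows "social_cost n (R t) \<le> 2 * social_cost n (R 0)"
proof -
  have "social_cost n (R t) \<le> potential n E (R t)"
    by (rule social_cost_le_potential[OF finite_E strategies_subset_E[OF assms]])
  also have "\<dots> \<le> potential n E (R 0)"
    by (rule potential_le_initial[OF assms])
  also have "\<dots> \<le> 2 * social_cost n (R 0)"
    by (rule potential_le_twice_social_cost[OF finite_E strategies_subset_E]) simp
  finally show ?thesis .
qed

text \<open>The time of the last move of player i; it exists because the covering lets every
  player move at least once.\<close>
definition last_move :: "nat \<Rightarrow> nat" where
  "last_move i = Max {t \<in> {1..T}. who t = i}"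

lemma last_move:
  assumes "i \<in> {1..n}"
  shows "last_move i \<in> {1..T}" and "who (last_move i) = i"
proof -
  have "{t \<in> {1..T}. who t = i} \<noteq> {}"
    using covering assms unfolding T_covering_def by blast
  then have "last_move i \<in> {t \<in> {1..T}. who t = i}"
    unfolding last_move_def by (intro Max_in) auto
  then show "last_move i \<in> {1..T}" and "who (last_move i) = i"
    by auto
qed

lemma after_last_move:
  assumes "t \<in> {1..T}" and "last_move i < t"
  shows "who t \<noteq> i"
proof
  assume "who t = i"
  then have "t \<le> last_move i"
    unfolding last_move_def using assms(1) by (intro Max_ge) auto
  with assms(2) show False by simp
qed

text \<open>Distinct players have distinct last moves, since only one player moves per step.\<close>
lemma inj_on_last_move: "inj_on last_move {1..n}"
  by (rule inj_onI) (metis last_move(2))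

lemma strategy_after_last_move:
  assumes "i \<in> {1..n}" and "last_move i \<le> t" and "t \<le> T"
  shows "R t i = R (last_move i) i"
  using assms(2,3)
proof (induction t)
  case 0
  then show ?case by simp
next
  case (Suc t)
  show ?case
  proof (cases "last_move i = Suc t")
    case True
    then show ?thesis by simp
  next
    case False
    with Suc have IH: "R t i = R (last_move i) i"
      by simp
    obtain s' where "R (Suc t) = (R t)(who (Suc t) := s')"
      using move[of "Suc t"] Suc.prems by auto
    moreover have "who (Suc t) \<noteq> i"
      using False Suc.prems by (intro after_last_move) auto
    ultimately show ?thesis
      using IH by simp
  qed
qed

definition last_move_cost :: "nat \<Rightarrow> nat" where
  "last_move_cost j = pcost n (R (last_move j)) j"

text \<open>When j moves for the last time, every player that had already made its own last
  move sits on the final strategy, so each resource of j's final strategy carries j and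
  all such players.\<close>
lemma last_move_cost_lower:
  assumes j: "j \<in> {1..n}"
  shows "(\<Sum>e\<in>R T j. 1 + card {i \<in> {1..n}. e \<in> R T i \<and> last_move i < last_move j})
           \<le> last_move_cost j"
proof -
  have tj: "last_move j \<le> T"
    using last_move(1)[OF j] by simp
  have final: "R T i = R (last_move j) i" if "i \<in> {1..n}" and "last_move i \<le> last_move j" for i
    using strategy_after_last_move[OF that(1) _ order.refl] strategy_after_last_move[OF that tj]
      tj that by simp
  have "1 + card {i \<in> {1..n}. e \<in> R T i \<and> last_move i < last_move j} \<le> load n (R (last_move j)) e"
    if "e \<in> R T j" for e
  proof -
    have "insert j {i \<in> {1..n}. e \<in> R T i \<and> last_move i < last_move j}
        \<subseteq> {i \<in> {1..n}. e \<in> R (last_move j) i}"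
      using j that final by auto
    then have "card (insert j {i \<in> {1..n}. e \<in> R T i \<and> last_move i < last_move j})
        \<le> load n (R (last_move j)) e"
      unfolding load_def by (intro card_mono) auto
    then show ?thesis by simp
  qed
  then have "(\<Sum>e\<in>R T j. 1 + card {i \<in> {1..n}. e \<in> R T i \<and> last_move i < last_move j})
      \<le> (\<Sum>e\<in>R T j. load n (R (last_move j)) e)"
    by (intro sum_mono)
  also have "\<dots> = last_move_cost j"
    unfolding last_move_cost_def pcost_def final[OF j order.refl] ..
  finally show ?thesis .
qed

lemma social_cost_final_le:
  "social_cost n (R T) \<le> 2 * (\<Sum>j\<in>{1..n}. last_move_cost j)"
proof -
  have fin: "finite (R T j)" if "j \<in> {1..n}" for j
  proof (rule finite_subset[OF _ finite_E])
    show "R T j \<subseteq> E"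
      using strategies_subset_E[of T] that by simp
  qed
  have "social_cost n (R T) = (\<Sum>j\<in>{1..n}. \<Sum>e\<in>R T j. card {i \<in> {1..n}. e \<in> R T i})"
    unfolding social_cost_def pcost_def load_def ..
  also have "\<dots> \<le> 2 * (\<Sum>j\<in>{1..n}.
      \<Sum>e\<in>R T j. 1 + card {i \<in> {1..n}. e \<in> R T i \<and> last_move i < last_move j})"
    by (rule sum_card_sharing_le_twice_earlier[OF _ inj_on_last_move fin]) simp
  also have "\<dots> \<le> 2 * (\<Sum>j\<in>{1..n}. last_move_cost j)"
    using last_move_cost_lower by (intro mult_left_mono sum_mono) auto
  finally show ?thesis .
qed

text \<open>Upper bound on a last-move cost: j's last move was a best response, so it costs at
  most a deviation to any strategy Op k of a fixed profile Op; averaging over k turns the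
  deviation costs into a resource sum.\<close>
lemma last_move_cost_upper:
  assumes j: "j \<in> {1..n}" and Op: "valid_profile n Sig Op"
  shows "n * last_move_cost j \<le> (\<Sum>e\<in>E. load n Op e * (load n (R (last_move j - 1)) e + 1))"
proof -
  define P where "P = R (last_move j - 1)"
  obtain s' where br: "best_response n Sig P j s'" and step: "R (last_move j) = P(j := s')"
    using move[OF last_move(1)[OF j]] unfolding last_move(2)[OF j] P_def by metis
  have "last_move_cost j \<le> (\<Sum>e\<in>Op k. load n P e + 1)" if k: "k \<in> {1..n}" for k
  proof -
    have "Op k \<in> Sig"
      using Op k unfolding valid_profile_def by blast
    then have "last_move_cost j \<le> pcost n (P(j := Op k)) j"
      using br unfolding last_move_cost_def step best_response_def by blast
    also have "\<dots> \<le> (\<Sum>e\<in>Op k. load n P e + 1)"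
      by (rule pcost_deviation_le[OF j])
    finally show ?thesis .
  qed
  then have "(\<Sum>k\<in>{1..n}. last_move_cost j) \<le> (\<Sum>k\<in>{1..n}. \<Sum>e\<in>Op k. load n P e + 1)"
    by (intro sum_mono)
  also have "\<dots> = (\<Sum>e\<in>E. load n Op e * (load n P e + 1))"
    using Op Sig_subset unfolding valid_profile_def
    by (subst sum_over_players_eq_sum_over_resources[OF finite_E]) auto
  finally show ?thesis
    unfolding P_def by simp
qed

text \<open>With Op optimal, Cauchy--Schwarz and the bound C(S^t) \<le> 2 C(S^0) give
  $n c_j \le \sqrt{2\,\mathrm{OPT}\, C(S^0)} + \mathrm{OPT}$.\<close>
lemma last_move_cost_bound:
  assumes j: "j \<in> {1..n}"
  shows "real n * real (last_move_cost j)
           \<le> sqrt (2 * real (OPT n Sig) * real (social_cost n (R 0))) + real (OPT n Sig)"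
proof -
  obtain Op where Op: "valid_profile n Sig Op" and opt: "social_cost n Op = OPT n Sig"
    using OPT_attained[OF valid_profile_R[of 0]] by auto
  define P where "P = R (last_move j - 1)"
  have tP: "last_move j - 1 \<le> T"
    using last_move(1)[OF j] by force
  have Op_E: "\<forall>i\<in>{1..n}. Op i \<subseteq> E"
    using Op Sig_subset unfolding valid_profile_def by blast
  have opt_sq: "(\<Sum>e\<in>E. (real (load n Op e))\<^sup>2) = real (OPT n Sig)"
    using social_cost_eq_sum_load_squares[OF finite_E Op_E] opt by simp
  have "(\<Sum>e\<in>E. (real (load n P e))\<^sup>2) = real (social_cost n P)"
    using social_cost_eq_sum_load_squares[OF finite_E strategies_subset_E[OF tP]]
    unfolding P_def by simp
  also have "\<dots> \<le> 2 * real (social_cost n (R 0))"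
    using social_cost_le_twice_initial[OF tP] unfolding P_def by simp
  finally have P_sq: "(\<Sum>e\<in>E. (real (load n P e))\<^sup>2) \<le> 2 * real (social_cost n (R 0))" .
  have "real n * real (last_move_cost j) \<le> real (\<Sum>e\<in>E. load n Op e * (load n P e + 1))"
    using last_move_cost_upper[OF j Op] unfolding P_def of_nat_mult[symmetric] of_nat_le_iff .
  also have "\<dots> \<le> sqrt (real (OPT n Sig) * (\<Sum>e\<in>E. (real (load n P e))\<^sup>2)) + real (OPT n Sig)"
    using sum_mult_succ_le_sqrt[of "load n Op" "load n P" E] unfolding opt_sq .
  also have "\<dots> \<le> sqrt (2 * real (OPT n Sig) * real (social_cost n (R 0))) + real (OPT n Sig)"
    using mult_left_mono[OF P_sq, of "real (OPT n Sig)"] by (simp add: algebra_simps)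
  finally show ?thesis .
qed

lemma social_cost_final_bound:
  assumes "n \<ge> 1"
  shows "real (social_cost n (R T))
           \<le> 2 * (sqrt (2 * real (OPT n Sig) * real (social_cost n (R 0))) + real (OPT n Sig))"
proof -
  define X where "X = sqrt (2 * real (OPT n Sig) * real (social_cost n (R 0))) + real (OPT n Sig)"
  have "real n * (\<Sum>j\<in>{1..n}. real (last_move_cost j)) \<le> (\<Sum>j\<in>{1..n}. X)"
    unfolding sum_distrib_left X_def using last_move_cost_bound by (intro sum_mono)
  then have "(\<Sum>j\<in>{1..n}. real (last_move_cost j)) \<le> X"
    using assms by simp
  then have "real (2 * (\<Sum>j\<in>{1..n}. last_move_cost j)) \<le> 2 * X"
    by simp
  with social_cost_final_le show ?thesis
    unfolding X_def by (meson of_nat_mono order_trans)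
qed

end

theorem lemma6:
  fixes n T :: nat and E :: "'e set" and Sig :: "'e set set"
    and R :: "nat \<Rightarrow> nat \<Rightarrow> 'e set" and who :: "nat \<Rightarrow> nat"
  assumes "n \<ge> 1" and "finite E" and "Sig \<subseteq> Pow E" and "Sig \<noteq> {}"
    and "T_covering n Sig T R who"
    and "OPT n Sig > 0"
  shows "real (social_cost n (R T)) / real (OPT n Sig)
           \<le> (2 + 2 * sqrt 2) * sqrt (real (social_cost n (R 0)) / real (OPT n Sig))"
proof -
  interpret best_response_covering n E Sig T R who
    using assms(2,3,5) by unfold_locales
  have "OPT n Sig \<le> social_cost n (R 0)"
    by (rule OPT_le_social_cost[OF valid_profile_R]) simp
  with assms(6) show ?thesis
    by (intro ratio_bound social_cost_final_bound[OF assms(1)]) auto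
qed

end
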